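(* Let $\alpha$ be a complex parameter and let $B_n^{(\alpha)}(x)$ be the generalized Bernoulli polynomials, defined by $e^{xt}\left(\frac{t}{e^t-1}\right)^{\alpha}=\sum_{n\ge0}B_n^{(\alpha)}(x)\frac{t^n}{n!}$. For $n\ge0$ put $$T_n(\alpha)=\sum_{k=0}^{n}(-1)^k\binom{k+\alpha-1}{k}\sum_{j=0}^{k}\frac{j!\,(-1)^{k+j}}{(n+j)!}\binom{k}{j}\left\{{n+j\atop j}\right\}.$$ Then $\left(\frac{t}{e^t-1}\right)^{\alpha}=\sum_{n\ge0}T_n(\alpha)t^n$, and for every $n\ge0$, $$B_n^{(\alpha)}(x)=n!\sum_{i=0}^{n}T_i(\alpha)\frac{x^{n-i}}{(n-i)!}.$$
   Context: $\left\{{m\atop j}\right\}$ denotes the Stirling number of the second kind, with $\left\{{0\atop 0}\right\}=1$ and $\left\{{m\atop 0}\right\}=0$ for $m>0$. For complex $y$ and integer $k\ge0$, $\binom{y}{k}=\frac{y(y-1)\cdots(y-k+1)}{k!}$. The power $\left(\frac{t}{e^t-1}\right)^{\alpha}$ is the formal series $(1+h)^{-\alpha}=\sum_{k\ge0}(-1)^k\binom{k+\alpha-1}{k}h^k$ with $h=\frac{e^t-1}{t}-1$. *)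

theory Defs
  imports Complex_Main "HOL-Computational_Algebra.Formal_Power_Series"
    "HOL-Combinatorics.Stirling"
begin

text \<open>h = (e^t - 1)/t - 1 as a formal power series (shift drops the zero constant term of e^t - 1).\<close>
definition bern_h :: "complex fps" where
  "bern_h = fps_shift 1 (fps_exp 1 - 1) - 1"

text \<open>(t/(e^t-1))^alpha := (1+h)^(-alpha) = sum_k (-1)^k binom(k+alpha-1,k) h^k,
  the formal sum taken coefficientwise (each coefficient sum has finite support since h has no constant term).\<close>
definition td_pow :: "complex \<Rightarrow> complex fps" where
  "td_pow \<alpha> = Abs_fps (\<lambda>n. \<Sum>k. (-1)^k * ((of_nat k + \<alpha> - 1) gchoose k) * fps_nth (bern_h ^ k) n)"

definition gen_bernoulli :: "complex \<Rightarrow> nat \<Rightarrow> complex \<Rightarrow> complex" where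
  "gen_bernoulli \<alpha> n x = fact n * fps_nth (fps_exp x * td_pow \<alpha>) n"

definition T_coeff :: "complex \<Rightarrow> nat \<Rightarrow> complex" where
  "T_coeff \<alpha> n = (\<Sum>k=0..n. (-1)^k * ((of_nat k + \<alpha> - 1) gchoose k) *
      (\<Sum>j=0..k. fact j * (-1)^(k+j) / fact (n+j) * of_nat (k choose j) * of_nat (Stirling (n+j) j)))"

end

theory Submission
  imports Defs
begin

(*
  The series h = (e^t - 1)/t - 1 equals G - 1 with G = (e^t - 1)/t, so by the binomial
  theorem h^k = sum_j (k choose j) (-1)^(k-j) G^j.  The coefficients of the powers of
  e^t - 1 are the classical Stirling numbers, n! [t^n] (e^t - 1)^j = j! S(n,j), proved by
  induction on n from the differential equation (E^j)' = j (E^(j+1) + E^j) for E = e^t - 1;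
  dividing by t^j shifts the index, [t^n] G^j = j! S(n+j,j)/(n+j)!.  This yields the
  inner sum of T_n(alpha) as [t^n] h^k.  Since h has no constant term, h^k contributes
  nothing to [t^n] for k > n, so the formal sum defining (t/(e^t-1))^alpha has n-th
  coefficient T_n(alpha).  The formula for B_n^(alpha)(x) is then the Cauchy product of
  this series with e^(xt).
*)

unbundle fps_syntax

lemma exp_minus_one_power_nth:
  "((fps_exp 1 - 1 :: 'a :: field_char_0 fps) ^ j) $ m = fact j * of_nat (Stirling m j) / fact m"
proof (induction m arbitrary: j)
  case 0
  then show ?case by (cases j) (simp_all add: fps_power_zeroth)
next
  case (Suc m)
  define E :: "'a fps" where "E = fps_exp 1 - 1"
  show ?case
  proof (cases j)
    case 0
    then show ?thesis by simp
  next
    case (Suc i)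
    have deriv: "fps_deriv (E ^ Suc i) = of_nat (Suc i) * (E ^ Suc i + E ^ i)"
    proof -
      have "fps_deriv (E ^ Suc i) = of_nat (Suc i) * fps_deriv E * E ^ i"
        using fps_deriv_power'[of E "Suc i"] by simp
      also have "fps_deriv E = E + 1" by (simp add: E_def)
      finally show ?thesis by (simp add: algebra_simps)
    qed
    have "of_nat (Suc m) * (E ^ Suc i) $ Suc m = fps_deriv (E ^ Suc i) $ m"
      by (simp only: fps_deriv_nth Suc_eq_plus1)
    also have "\<dots> = of_nat (Suc i) * ((E ^ Suc i) $ m + (E ^ i) $ m)"
      by (simp only: deriv fps_of_nat[symmetric] fps_mult_left_const_nth fps_add_nth)
    also have "\<dots> = of_nat (Suc i) * (fact (Suc i) * of_nat (Stirling m (Suc i)) / fact m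
        + fact i * of_nat (Stirling m i) / fact m)"
      by (simp only: Suc.IH E_def)
    also have "\<dots> = fact (Suc i) * of_nat (Stirling (Suc m) (Suc i)) / fact m"
      by (simp add: field_simps)
    finally show ?thesis
      using Suc by (simp add: E_def field_simps del: of_nat_Suc)
  qed
qed

text \<open>The same for the powers of G = (e^t - 1)/t: dividing by t^j shifts the index by j.\<close>
lemma exp_quotient_power_nth:
  "(fps_shift 1 (fps_exp 1 - 1 :: 'a :: field_char_0 fps) ^ j) $ n
     = fact j * of_nat (Stirling (n + j) j) / fact (n + j)"
proof -
  define E :: "'a fps" where "E = fps_exp 1 - 1"
  have "fps_shift 1 E * fps_X = E"
    by (rule fps_ext, case_tac n) (simp_all add: E_def)
  then have "E ^ j = fps_shift 1 E ^ j * fps_X ^ j"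
    by (metis power_mult_distrib)
  then have "(fps_shift 1 E ^ j) $ n = (E ^ j) $ (n + j)"
    by (simp add: fps_X_power_mult_right_nth)
  then show ?thesis
    by (simp add: E_def exp_minus_one_power_nth)
qed

lemma minus_one_power_add_eq_diff:
  assumes "j \<le> k"
  shows "(-1 :: 'a :: ring_1) ^ (k + j) = (-1) ^ (k - j)"
proof -
  have "k + j = (k - j) + 2 * j" using assms by simp
  then have "(-1 :: 'a) ^ (k + j) = (-1) ^ (k - j) * ((-1) ^ 2) ^ j"
    by (simp only: power_add power_mult)
  then show ?thesis by simp
qed

lemma bern_h_power_nth:
  "(bern_h ^ k) $ n = (\<Sum>j=0..k. fact j * (-1)^(k+j) / fact (n+j)
      * of_nat (k choose j) * of_nat (Stirling (n+j) j))"
proof -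
  define G :: "complex fps" where "G = fps_shift 1 (fps_exp 1 - 1)"
  have G_power_nth: "(G ^ j) $ n = fact j * of_nat (Stirling (n + j) j) / fact (n + j)" for j
    unfolding G_def by (rule exp_quotient_power_nth)
  have "bern_h ^ k = (G + (-1)) ^ k"
    by (simp add: bern_h_def G_def)
  also have "\<dots> = (\<Sum>j\<le>k. fps_const (of_nat (k choose j) * (-1)^(k-j)) * G ^ j)"
    unfolding binomial_ring
    by (intro sum.cong refl)
       (simp add: fps_of_nat[symmetric] fps_const_power[symmetric] fps_const_neg[symmetric]
         flip: fps_const_mult del: fps_const_neg)
  finally have "(bern_h ^ k) $ n
      = (\<Sum>j\<le>k. of_nat (k choose j) * (-1)^(k-j) * (fact j * of_nat (Stirling (n+j) j) / fact (n+j)))"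
    by (simp add: fps_sum_nth G_power_nth)
  also have "\<dots> = (\<Sum>j=0..k. fact j * (-1)^(k+j) / fact (n+j)
      * of_nat (k choose j) * of_nat (Stirling (n+j) j))"
    unfolding atMost_atLeast0 by (intro sum.cong refl) (simp add: minus_one_power_add_eq_diff)
  finally show ?thesis .
qed

text \<open>Since h has no constant term, only k \<le> n contribute to [t^n] of the formal sum.\<close>
lemma td_pow_nth: "td_pow \<alpha> $ n = T_coeff \<alpha> n"
proof -
  have h_vanishes: "(bern_h ^ k) $ n = 0" if "n < k" for k
    using startsby_zero_power_prefix[of bern_h k] that by (simp add: bern_h_def)
  have "td_pow \<alpha> $ n = (\<Sum>k. (-1)^k * ((of_nat k + \<alpha> - 1) gchoose k) * (bern_h ^ k) $ n)"
    by (simp add: td_pow_def)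
  also have "\<dots> = (\<Sum>k=0..n. (-1)^k * ((of_nat k + \<alpha> - 1) gchoose k) * (bern_h ^ k) $ n)"
    by (rule suminf_finite) (auto simp: h_vanishes)
  also have "\<dots> = T_coeff \<alpha> n"
    unfolding T_coeff_def bern_h_power_nth ..
  finally show ?thesis .
qed

lemma mult_fps_exp_nth:
  "(f * fps_exp x) $ n = (\<Sum>i=0..n. f $ i * x ^ (n - i) / fact (n - i))"
  for f :: "'a :: field_char_0 fps"
  by (simp add: fps_mult_nth)

theorem mainTheorem10:
  fixes \<alpha> :: complex
  shows "td_pow \<alpha> = Abs_fps (T_coeff \<alpha>)
    \<and> (\<forall>n x. gen_bernoulli \<alpha> n x =
          fact n * (\<Sum>i=0..n. T_coeff \<alpha> i * x ^ (n - i) / fact (n - i)))"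
proof (intro conjI allI)
  show "td_pow \<alpha> = Abs_fps (T_coeff \<alpha>)"
    by (rule fps_ext) (simp add: td_pow_nth)
  fix n x
  have "gen_bernoulli \<alpha> n x = fact n * (td_pow \<alpha> * fps_exp x) $ n"
    by (simp add: gen_bernoulli_def mult.commute)
  then show "gen_bernoulli \<alpha> n x =
      fact n * (\<Sum>i=0..n. T_coeff \<alpha> i * x ^ (n - i) / fact (n - i))"
    by (simp add: mult_fps_exp_nth td_pow_nth)
qed

end
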